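(* Let $p\ge 0$ be an integer, $\kappa=\frac12(p+1)(p+2)$, and define $N_p(R)=\sum_{\sigma\in X_{p+1}}W_2(\sigma,R)$ and $D_p(R)=\sum_{\sigma\in X_{p-1}}W_0(\sigma,R)$. Then \[N_p(R)=R^{\kappa}+\tfrac{(p+1)^2(p+2)}{2}R^{\kappa-1}+\tfrac{p(p+1)^3(p+2)(p+3)}{8}R^{\kappa-2}+O(R^{\kappa-3}),\] \[D_p(R)=R^{\kappa-2p-1}+\tfrac{(p-1)p(p+1)}{2}R^{\kappa-2p-2}+\tfrac{(p-2)(p-1)p(p+1)^3}{8}R^{\kappa-2p-3}+O(R^{\kappa-2p-4}),\] where $O(R^m)$ denotes a polynomial of degree at most $m$.
   Context: A Schröder path is a finite directed path in $\mathbb{Z}^2$ each of whose steps is an ascent $(x,y)\to(x+1,y+1)$, a descent $(x,y)\to(x+1,y-1)$, or a flat step $(x,y)\to(x+2,y)$ (the empty path is allowed). Let $P_i=(-i,i)$, $Q_i=(i,i)$. For $k\ge0$, $X_k$ is the set of collections of $k+1$ pairwise vertex-disjoint Schröder paths from $\{P_i\}_{i=0}^k$ to $\{Q_i\}_{i=0}^k$; $X_{-1}$ consists only of the empty collection. $W_0(\sigma,R)$ is the product over all steps of $\sigma$ of: $1$ per ascent, $R$ per flat step, $y+1$ per descent starting at height $y$. $W_2(\sigma,R)$ is the same but with $y-1$ per descent starting at height $y$. Empty products are $1$. *)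

theory Defs
  imports "HOL-Computational_Algebra.Polynomial"
begin

datatype sstep = Asc | Desc | Flat

fun move :: "int \<times> int \<Rightarrow> sstep \<Rightarrow> int \<times> int" where
  "move (x, y) Asc = (x + 1, y + 1)"
| "move (x, y) Desc = (x + 1, y - 1)"
| "move (x, y) Flat = (x + 2, y)"

fun verts :: "int \<times> int \<Rightarrow> sstep list \<Rightarrow> (int \<times> int) list" where
  "verts p [] = [p]"
| "verts p (s # ss) = p # verts (move p s) ss"

definition endpt :: "int \<times> int \<Rightarrow> sstep list \<Rightarrow> int \<times> int" where
  "endpt p ss = last (verts p ss)"

fun pathW :: "(int \<Rightarrow> real) \<Rightarrow> real \<Rightarrow> int \<times> int \<Rightarrow> sstep list \<Rightarrow> real" where
  "pathW d R p [] = 1"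
| "pathW d R p (Asc # ss) = pathW d R (move p Asc) ss"
| "pathW d R p (Desc # ss) = d (snd p) * pathW d R (move p Desc) ss"
| "pathW d R p (Flat # ss) = R * pathW d R (move p Flat) ss"

definition Pt :: "nat \<Rightarrow> int \<times> int" where "Pt i = (- int i, int i)"
definition Qt :: "nat \<Rightarrow> int \<times> int" where "Qt i = (int i, int i)"

definition idx :: "int \<Rightarrow> nat set" where "idx k = {i. int i \<le> k}"

text \<open>A collection is encoded by the function sending i to the step list of the
  path starting at P_i (starting points are distinct, so this is a bijective encoding);
  unused indices carry the empty list. For k = -1 the only element is the empty collection.\<close>
definition X :: "int \<Rightarrow> (nat \<Rightarrow> sstep list) set" where
  "X k = {\<sigma>. (\<forall>i. i \<notin> idx k \<longrightarrow> \<sigma> i = []) \<and>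
              (\<lambda>i. endpt (Pt i) (\<sigma> i)) ` idx k = Qt ` idx k \<and>
              (\<forall>i\<in>idx k. \<forall>j\<in>idx k. i \<noteq> j \<longrightarrow>
                 set (verts (Pt i) (\<sigma> i)) \<inter> set (verts (Pt j) (\<sigma> j)) = {})}"

definition W0 :: "int \<Rightarrow> (nat \<Rightarrow> sstep list) \<Rightarrow> real \<Rightarrow> real" where
  "W0 k \<sigma> R = (\<Prod>i\<in>idx k. pathW (\<lambda>y. of_int y + 1) R (Pt i) (\<sigma> i))"

definition W2 :: "int \<Rightarrow> (nat \<Rightarrow> sstep list) \<Rightarrow> real \<Rightarrow> real" where
  "W2 k \<sigma> R = (\<Prod>i\<in>idx k. pathW (\<lambda>y. of_int y - 1) R (Pt i) (\<sigma> i))"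

definition Np :: "nat \<Rightarrow> real \<Rightarrow> real" where
  "Np p R = (\<Sum>\<sigma>\<in>X (int p + 1). W2 (int p + 1) \<sigma> R)"

definition Dp :: "nat \<Rightarrow> real \<Rightarrow> real" where
  "Dp p R = (\<Sum>\<sigma>\<in>X (int p - 1). W0 (int p - 1) \<sigma> R)"

definition bigO_poly :: "real poly \<Rightarrow> int \<Rightarrow> bool" where
  "bigO_poly E m = (if m < 0 then E = 0 else degree E \<le> nat m)"

end

theory Submission
  imports Defs
begin

text \<open>The paths of a family in X m are vertex-disjoint and all vertices lie on the even
  sublattice, so two paths can never cross: path i ends at Q i and stays strictly below path
  i + 1. Path i then has i - a flat steps when it has a ascents, so a family with a ascents in
  total has weight R^(kappa - a) times a factor free of R, where kappa = m(m+1)/2. With at most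
  two ascents, squeezing between neighbours forces all of them into the two top paths: either
  path m alone, whose flat-free skeleton is one of the Dyck words UD, UUDD, UDUD, or one hump
  each in paths m - 1 and m, the lower hump nested inside the upper one. Counting the ways to
  insert the flat steps gives C(m+1,2), C(m+2,4), C(m+2,4) and C(m+2,4) families of descent
  weights d(m+1), d(m+2) d(m+1), d(m+1)^2 and d(m) d(m+1); taking m = p + 1, d(y) = y - 1
  and m = p - 1, d(y) = y + 1 yields the coefficients of N p and D p.\<close>

abbreviation n_asc :: "sstep list \<Rightarrow> nat" where "n_asc ss \<equiv> count_list ss Asc"
abbreviation n_desc :: "sstep list \<Rightarrow> nat" where "n_desc ss \<equiv> count_list ss Desc"
abbreviation n_flat :: "sstep list \<Rightarrow> nat" where "n_flat ss \<equiv> count_list ss Flat"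

lemma length_eq_step_counts: "length ss = n_asc ss + n_desc ss + n_flat ss"
proof (induction ss)
  case (Cons s ss) then show ?case by (cases s) auto
qed simp

lemma count_list_replicate [simp]: "count_list (replicate n x) y = (if x = y then n else 0)"
  by (induction n) auto

lemma replicate_Flat_if_no_asc_desc: "n_asc ss = 0 \<Longrightarrow> n_desc ss = 0 \<Longrightarrow> ss = replicate (n_flat ss) Flat"
proof (induction ss)
  case (Cons s ss) then show ?case by (cases s) auto
qed simp

lemma fst_move: "fst (move p s) = fst p + (if s = Flat then 2 else 1)"
  by (cases p; cases s) auto

lemma snd_move: "snd (move p s) = snd p + (if s = Asc then 1 else if s = Desc then -1 else 0)"
  by (cases p; cases s) auto

lemma verts_nonempty: "verts p ss \<noteq> []"
  by (cases ss) auto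

lemma endpt_Nil [simp]: "endpt p [] = p"
  by (simp add: endpt_def)

lemma endpt_Cons [simp]: "endpt p (s # ss) = endpt (move p s) ss"
  by (simp add: endpt_def verts_nonempty)

lemma endpt_append: "endpt p (xs @ ys) = endpt (endpt p xs) ys"
  by (induction xs arbitrary: p) auto

lemma endpt_in_verts: "endpt p ss \<in> set (verts p ss)"
  unfolding endpt_def by (simp add: verts_nonempty)

lemma fst_endpt: "fst (endpt p ss) = fst p + int (n_asc ss) + int (n_desc ss) + 2 * int (n_flat ss)"
proof (induction ss arbitrary: p)
  case (Cons s ss) then show ?case by (cases s) (auto simp: fst_move)
qed simp

lemma snd_endpt: "snd (endpt p ss) = snd p + int (n_asc ss) - int (n_desc ss)"
  by (induction ss arbitrary: p) (auto simp: snd_move)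

lemma endpt_replicate_Flat: "endpt (x, y) (replicate n Flat) = (x + 2 * int n, y)"
  using fst_endpt[of "(x, y)" "replicate n Flat"] snd_endpt[of "(x, y)" "replicate n Flat"]
  by (simp add: prod_eq_iff)

lemma fst_verts_bounds: "v \<in> set (verts p ss) \<Longrightarrow> fst p \<le> fst v \<and> fst v \<le> fst (endpt p ss)"
proof (induction ss arbitrary: p)
  case (Cons s ss)
  show ?case
  proof (cases "v = p")
    case True
    then show ?thesis using fst_endpt[of "move p s" ss] fst_move[of p s] by (auto split: if_splits)
  next
    case False
    then have "v \<in> set (verts (move p s) ss)" using Cons.prems by simp
    from Cons.IH[OF this] show ?thesis using fst_move[of p s] by (auto split: if_splits)
  qed
qed simp

lemma verts_even: "even (fst p + snd p) \<Longrightarrow> v \<in> set (verts p ss) \<Longrightarrow> even (fst v + snd v)"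
proof (induction ss arbitrary: p)
  case (Cons s ss)
  have "even (fst (move p s) + snd (move p s))"
    using Cons.prems(1) fst_move[of p s] snd_move[of p s] by (cases s) auto
  with Cons show ?case by (cases "v = p") auto
qed simp

section \<open>Heights and noncrossing\<close>

text \<open>The midpoint of a flat step gets the height of the step; outside the path the height is
  extended by constants.\<close>
fun height :: "int \<times> int \<Rightarrow> sstep list \<Rightarrow> int \<Rightarrow> int" where
  "height (x, y) [] t = y"
| "height (x, y) (s # ss) t =
     (if t \<le> x \<or> (s = Flat \<and> t = x + 1) then y else height (move (x, y) s) ss t)"

lemma height_le_start: "t \<le> fst p \<Longrightarrow> height p ss t = snd p"
  by (cases p; cases ss) auto

lemma height_start: "height p ss (fst p) = snd p"
  by (simp add: height_le_start)

lemma height_replicate_Flat: "height p (replicate n Flat) t = snd p"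
  by (induction n arbitrary: p) (auto simp: height_le_start)

lemma height_append:
  "height p (xs @ ys) t = (if t \<le> fst (endpt p xs) then height p xs t else height (endpt p xs) ys t)"
proof (induction xs arbitrary: p)
  case Nil then show ?case by (cases p) (simp add: height_le_start)
next
  case (Cons s xs)
  obtain x y where p: "p = (x, y)" by fastforce
  have "fst (move p s) \<le> fst (endpt (move p s) xs)" by (simp add: fst_endpt)
  then show ?case using Cons.IH[of "move p s"] fst_move[of p s] p by (cases "s = Flat") auto
qed

lemma height_vertex: "v \<in> set (verts p ss) \<Longrightarrow> height p ss (fst v) = snd v"
proof (induction ss arbitrary: p)
  case (Cons s ss)
  obtain x y where p: "p = (x, y)" by fastforce
  show ?case
  proof (cases "v = p")
    case False
    then have v: "v \<in> set (verts (move p s) ss)" using Cons.prems by simp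
    then have "fst (move p s) \<le> fst v" using fst_verts_bounds by blast
    then show ?thesis using Cons.IH[OF v] fst_move[of p s] p by (auto split: if_splits)
  qed (use p in simp)
qed (cases p, auto)

lemma height_end: "height p ss (fst (endpt p ss)) = snd (endpt p ss)"
  using height_vertex[OF endpt_in_verts] .

lemma height_vertex_or_flat:
  "fst p \<le> t \<Longrightarrow> t \<le> fst (endpt p ss) \<Longrightarrow>
   (t, height p ss t) \<in> set (verts p ss) \<or> (t - 1, height p ss t) \<in> set (verts p ss)"
proof (induction ss arbitrary: p)
  case Nil then show ?case by (cases p) auto
next
  case (Cons s ss)
  obtain x y where p: "p = (x, y)" by fastforce
  have "t = x \<or> (s = Flat \<and> t = x + 1) \<or> fst (move p s) \<le> t"
    using Cons.prems(1) p by (cases s) auto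
  then consider "t = x" | "s = Flat \<and> t = x + 1" | "fst (move p s) \<le> t" by blast
  then show ?case
  proof cases
    case 3
    then have "height p (s # ss) t = height (move p s) ss t"
      using fst_move[of p s] p by (auto split: if_splits)
    then show ?thesis using Cons.IH[OF 3] Cons.prems(2) by auto
  qed (use p in auto)
qed

lemma height_step:
  assumes "fst p \<le> t" and "t < fst (endpt p ss)"
  shows "\<bar>height p ss (t + 1) - height p ss t\<bar> \<le> 1"
    and "(t, height p ss t) \<notin> set (verts p ss) \<Longrightarrow> height p ss (t + 1) = height p ss t"
proof -
  have "\<bar>height p ss (t + 1) - height p ss t\<bar> \<le> 1 \<and>
        ((t, height p ss t) \<notin> set (verts p ss) \<longrightarrow> height p ss (t + 1) = height p ss t)"
    using assms
  proof (induction ss arbitrary: p)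
    case (Cons s ss)
    obtain x y where p: "p = (x, y)" by fastforce
    have "t = x \<or> (s = Flat \<and> t = x + 1) \<or> (fst (move p s) \<le> t \<and> \<not> (s = Flat \<and> t = x + 1) \<and> t \<noteq> x)"
      using Cons.prems(1) p by (cases s) auto
    then consider "t = x" | "s = Flat \<and> t = x + 1" | "fst (move p s) \<le> t \<and> \<not> (s = Flat \<and> t = x + 1) \<and> t \<noteq> x"
      by blast
    then show ?case
    proof cases
      case 1
      have "height (move p s) ss (x + 1) = snd (move p s) \<or> s = Flat"
        using height_le_start[of "x + 1" "move p s" ss] fst_move[of p s] p by auto
      then show ?thesis using 1 p snd_move[of p s] by (cases s) auto
    next
      case 2
      then show ?thesis using p height_le_start[of "x + 2" "(x + 2, y)" ss] by (auto simp: add.commute)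
    next
      case 3
      then show ?thesis using Cons.IH[of "move p s"] Cons.prems(2) p by auto
    qed
  qed simp
  then show "\<bar>height p ss (t + 1) - height p ss t\<bar> \<le> 1"
    and "(t, height p ss t) \<notin> set (verts p ss) \<Longrightarrow> height p ss (t + 1) = height p ss t"
    by auto
qed

lemma height_lipschitz:
  assumes "fst p \<le> t" and "t \<le> t'" and "t' \<le> fst (endpt p ss)"
  shows "\<bar>height p ss t' - height p ss t\<bar> \<le> t' - t"
  using assms(2,3)
proof (induction t' rule: int_ge_induct)
  case (step t')
  then show ?case using height_step(1)[of p t' ss] assms(1) by fastforce
qed simp

text \<open>Vertices of paths starting on the even sublattice lie on it, so at a common abscissa
  two vertex-disjoint such paths can neither meet nor pass each other.\<close>
lemma disjoint_paths_height_neq: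
  assumes "even (fst p1 + snd p1)" and "even (fst p2 + snd p2)"
    and disj: "set (verts p1 ss1) \<inter> set (verts p2 ss2) = {}"
    and "fst p1 \<le> t" "t \<le> fst (endpt p1 ss1)" and "fst p2 \<le> t" "t \<le> fst (endpt p2 ss2)"
  shows "height p1 ss1 t \<noteq> height p2 ss2 t"
proof
  assume eq: "height p1 ss1 t = height p2 ss2 t"
  define h where "h = height p1 ss1 t"
  have "(t, h) \<in> set (verts p1 ss1) \<or> (t - 1, h) \<in> set (verts p1 ss1)"
    using height_vertex_or_flat[OF assms(4,5)] unfolding h_def .
  then obtain v1 where v1: "v1 \<in> set (verts p1 ss1)" "v1 = (t, h) \<or> v1 = (t - 1, h)" by blast
  have "(t, h) \<in> set (verts p2 ss2) \<or> (t - 1, h) \<in> set (verts p2 ss2)"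
    using height_vertex_or_flat[OF assms(6,7)] unfolding h_def eq .
  then obtain v2 where v2: "v2 \<in> set (verts p2 ss2)" "v2 = (t, h) \<or> v2 = (t - 1, h)" by blast
  have "even (fst v1 + snd v1)" "even (fst v2 + snd v2)"
    using verts_even[OF assms(1) v1(1)] verts_even[OF assms(2) v2(1)] .
  moreover have "odd (t - 1 + h) \<longleftrightarrow> even (t + h)" by presburger
  ultimately have "v1 = v2" using v1(2) v2(2) by auto
  then show False using disj v1(1) v2(1) by blast
qed

lemma disjoint_paths_height_less:
  assumes e1: "even (fst p1 + snd p1)" and e2: "even (fst p2 + snd p2)"
    and disj: "set (verts p1 ss1) \<inter> set (verts p2 ss2) = {}"
    and "fst p1 \<le> t0" "fst p2 \<le> t0" "t0 \<le> t"
    and "t \<le> fst (endpt p1 ss1)" "t \<le> fst (endpt p2 ss2)"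
    and "height p1 ss1 t0 < height p2 ss2 t0"
  shows "height p1 ss1 t < height p2 ss2 t"
  using assms(6-8)
proof (induction t rule: int_ge_induct)
  case base then show ?case by (simp add: assms(9))
next
  case (step t)
  let ?h1 = "height p1 ss1" and ?h2 = "height p2 ss2"
  have t: "fst p1 \<le> t" "t < fst (endpt p1 ss1)" "fst p2 \<le> t" "t < fst (endpt p2 ss2)"
    using assms(4,5) step by auto
  have lt: "?h1 t < ?h2 t" using step by simp
  have "?h1 (t + 1) \<noteq> ?h2 (t + 1)"
    using disjoint_paths_height_neq[OF e1 e2 disj] t by simp
  show ?case
  proof (rule ccontr)
    assume "\<not> ?h1 (t + 1) < ?h2 (t + 1)"
    with \<open>?h1 (t + 1) \<noteq> ?h2 (t + 1)\<close> have "?h2 (t + 1) < ?h1 (t + 1)" by simp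
    with lt height_step(1)[of p1 t ss1] height_step(1)[of p2 t ss2] t
    have "?h2 t = ?h1 t + 1" "?h1 (t + 1) \<noteq> ?h1 t" "?h2 (t + 1) \<noteq> ?h2 t" by auto
    moreover from this(2,3) have "(t, ?h1 t) \<in> set (verts p1 ss1)" "(t, ?h2 t) \<in> set (verts p2 ss2)"
      using height_step(2) t by blast+
    ultimately show False using verts_even[OF e1] verts_even[OF e2] by force
  qed
qed

lemma disjoint_verts_if_height_neq:
  assumes "\<And>t. fst p1 \<le> t \<Longrightarrow> t \<le> fst (endpt p1 ss1) \<Longrightarrow> fst p2 \<le> t \<Longrightarrow> t \<le> fst (endpt p2 ss2)
     \<Longrightarrow> height p1 ss1 t \<noteq> height p2 ss2 t"
  shows "set (verts p1 ss1) \<inter> set (verts p2 ss2) = {}"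
proof (rule ccontr)
  assume "\<not> ?thesis"
  then obtain v where v: "v \<in> set (verts p1 ss1)" "v \<in> set (verts p2 ss2)" by auto
  then have "height p1 ss1 (fst v) = snd v" "height p2 ss2 (fst v) = snd v" using height_vertex by auto
  then show False using assms[of "fst v"] fst_verts_bounds[OF v(1)] fst_verts_bounds[OF v(2)] by simp
qed

section \<open>Families of nonintersecting paths\<close>

lemma idx_of_nat [simp]: "idx (int m) = {..m}"
  by (auto simp: idx_def)

lemma even_Pt: "even (fst (Pt i) + snd (Pt i))"
  by (simp add: Pt_def)

abbreviation path_height :: "(nat \<Rightarrow> sstep list) \<Rightarrow> nat \<Rightarrow> int \<Rightarrow> int" where
  "path_height \<sigma> i \<equiv> height (Pt i) (\<sigma> i)"

lemma path_height_start: "path_height \<sigma> i (- int i) = int i"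
  using height_start[of "Pt i" "\<sigma> i"] by (simp add: Pt_def)

lemma X_outside: "\<sigma> \<in> X (int m) \<Longrightarrow> m < i \<Longrightarrow> \<sigma> i = []"
  by (auto simp: X_def)

lemma X_disjoint: "\<sigma> \<in> X (int m) \<Longrightarrow> i \<le> m \<Longrightarrow> j \<le> m \<Longrightarrow> i \<noteq> j \<Longrightarrow>
    set (verts (Pt i) (\<sigma> i)) \<inter> set (verts (Pt j) (\<sigma> j)) = {}"
  unfolding X_def by auto

lemma X_endpt_diagonal:
  assumes "\<sigma> \<in> X (int m)" and "i \<le> m"
  obtains e where "endpt (Pt i) (\<sigma> i) = (e, e)" and "0 \<le> e" and "e \<le> int m"
proof -
  have "endpt (Pt i) (\<sigma> i) \<in> (\<lambda>i. endpt (Pt i) (\<sigma> i)) ` {..m}" using assms(2) by simp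
  also have "\<dots> = Qt ` {..m}" using assms(1) unfolding X_def by simp
  finally show ?thesis using that by (auto simp: Qt_def)
qed

text \<open>If path j ended left of path i, then path i, which starts below path j, would have to
  cross it to reach the diagonal.\<close>
lemma X_endpt_fst_less:
  assumes X: "\<sigma> \<in> X (int m)" and ij: "i < j" "j \<le> m"
  shows "fst (endpt (Pt i) (\<sigma> i)) < fst (endpt (Pt j) (\<sigma> j))"
proof (rule ccontr)
  assume nlt: "\<not> ?thesis"
  have disj: "set (verts (Pt i) (\<sigma> i)) \<inter> set (verts (Pt j) (\<sigma> j)) = {}"
    using X_disjoint[OF X, of i j] ij by simp
  obtain ei where ei: "endpt (Pt i) (\<sigma> i) = (ei, ei)" "0 \<le> ei"
    using X_endpt_diagonal[OF X, of i] ij by auto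
  obtain ej where ej: "endpt (Pt j) (\<sigma> j) = (ej, ej)" "0 \<le> ej"
    using X_endpt_diagonal[OF X ij(2)] by auto
  have "ei \<noteq> ej"
    using disj endpt_in_verts[of "Pt i" "\<sigma> i"] endpt_in_verts[of "Pt j" "\<sigma> j"] ei ej by auto
  then have lt: "ej < ei" using nlt ei ej by simp
  have "\<bar>path_height \<sigma> j (- int i) - path_height \<sigma> j (- int j)\<bar> \<le> - int i - - int j"
    using height_lipschitz[of "Pt j" "- int j" "- int i" "\<sigma> j"] ej ij by (simp add: Pt_def)
  then have "path_height \<sigma> i (- int i) \<le> path_height \<sigma> j (- int i)"
    using path_height_start[of i \<sigma>] path_height_start[of j \<sigma>] by simp
  moreover have "path_height \<sigma> i (- int i) \<noteq> path_height \<sigma> j (- int i)"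
    using disjoint_paths_height_neq[OF even_Pt even_Pt disj, of "- int i"] ei ej ij by (simp add: Pt_def)
  ultimately have "path_height \<sigma> i (- int i) < path_height \<sigma> j (- int i)" by simp
  then have "path_height \<sigma> i ej < path_height \<sigma> j ej"
    using disjoint_paths_height_less[OF even_Pt even_Pt disj, of "- int i" ej] ei ej ij lt
    by (simp add: Pt_def)
  moreover have "path_height \<sigma> j ej = ej" using height_end[of "Pt j" "\<sigma> j"] ej by simp
  moreover have "\<bar>path_height \<sigma> i ei - path_height \<sigma> i ej\<bar> \<le> ei - ej"
    using height_lipschitz[of "Pt i" ej ei "\<sigma> i"] ei ej lt by (simp add: Pt_def)
  moreover have "path_height \<sigma> i ei = ei" using height_end[of "Pt i" "\<sigma> i"] ei by simp
  ultimately show False by simp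
qed

lemma X_endpt:
  assumes X: "\<sigma> \<in> X (int m)" and "i \<le> m"
  shows "endpt (Pt i) (\<sigma> i) = Qt i"
proof -
  define e where "e i = fst (endpt (Pt i) (\<sigma> i))" for i
  have diag: "endpt (Pt i) (\<sigma> i) = (e i, e i) \<and> 0 \<le> e i \<and> e i \<le> int m" if "i \<le> m" for i
    using X_endpt_diagonal[OF X that] e_def by (metis fst_conv)
  have ge: "int i \<le> e i" if "i \<le> m" for i
    using that
  proof (induction i)
    case (Suc i) then show ?case using X_endpt_fst_less[OF X, of i "Suc i"] e_def by simp
  qed (use diag in simp)
  have le: "e (m - k) \<le> int (m - k)" if "k \<le> m" for k
    using that
  proof (induction k)
    case (Suc k)
    have "e (m - Suc k) < e (m - k)"
      using X_endpt_fst_less[OF X, of "m - Suc k" "m - k"] Suc.prems e_def by simp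
    moreover have "int (m - k) = int (m - Suc k) + 1" using Suc.prems by simp
    ultimately show ?case using Suc by simp
  qed (use diag in simp)
  have "e i = int i" using ge[of i] le[of "m - i"] assms(2) by simp
  then show ?thesis using diag[OF assms(2)] by (simp add: Qt_def)
qed

lemma X_step_counts:
  assumes "\<sigma> \<in> X (int m)" and "i \<le> m"
  shows "n_desc (\<sigma> i) = n_asc (\<sigma> i)" and "n_flat (\<sigma> i) + n_asc (\<sigma> i) = i"
  using X_endpt[OF assms] fst_endpt[of "Pt i" "\<sigma> i"] snd_endpt[of "Pt i" "\<sigma> i"]
  by (simp_all add: Pt_def Qt_def prod_eq_iff)

lemma X_length: "\<sigma> \<in> X (int m) \<Longrightarrow> i \<le> m \<Longrightarrow> length (\<sigma> i) = i + n_asc (\<sigma> i)"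
  using X_step_counts length_eq_step_counts by fastforce

lemma X_no_asc_0: "\<sigma> \<in> X (int m) \<Longrightarrow> n_asc (\<sigma> 0) = 0"
  using X_step_counts[of \<sigma> m 0] by simp

lemma X_path_height_end: "\<sigma> \<in> X (int m) \<Longrightarrow> i \<le> m \<Longrightarrow> path_height \<sigma> i (int i) = int i"
  using height_end[of "Pt i" "\<sigma> i"] X_endpt by (simp add: Qt_def)

lemma X_verts:
  assumes "\<sigma> \<in> X (int m)" and "i \<le> m" and "v \<in> set (verts (Pt i) (\<sigma> i))"
  shows "- int i \<le> fst v" "fst v \<le> int i" "path_height \<sigma> i (fst v) = snd v"
  using fst_verts_bounds[OF assms(3)] X_endpt[OF assms(1,2)] height_vertex[OF assms(3)]
  by (auto simp: Pt_def Qt_def)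

lemma X_path_height_less_Suc:
  assumes X: "\<sigma> \<in> X (int m)" and "i < m" and "- int i \<le> t" "t \<le> int i"
  shows "path_height \<sigma> i t < path_height \<sigma> (Suc i) t"
proof -
  have disj: "set (verts (Pt i) (\<sigma> i)) \<inter> set (verts (Pt (Suc i)) (\<sigma> (Suc i))) = {}"
    using X_disjoint[OF X, of i "Suc i"] assms(2) by simp
  have ends: "endpt (Pt i) (\<sigma> i) = (int i, int i)" "endpt (Pt (Suc i)) (\<sigma> (Suc i)) = (int i + 1, int i + 1)"
    using X_endpt[OF X, of i] X_endpt[OF X, of "Suc i"] assms(2) by (simp_all add: Qt_def)
  have "\<bar>path_height \<sigma> (Suc i) (- int i) - path_height \<sigma> (Suc i) (- int (Suc i))\<bar> \<le> 1"
    using height_lipschitz[of "Pt (Suc i)" "- int (Suc i)" "- int i" "\<sigma> (Suc i)"] ends by (simp add: Pt_def)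
  then have "path_height \<sigma> i (- int i) \<le> path_height \<sigma> (Suc i) (- int i)"
    using path_height_start[of i \<sigma>] path_height_start[of "Suc i" \<sigma>] by simp
  moreover have "path_height \<sigma> i (- int i) \<noteq> path_height \<sigma> (Suc i) (- int i)"
    using disjoint_paths_height_neq[OF even_Pt even_Pt disj, of "- int i"] ends by (simp add: Pt_def)
  ultimately show ?thesis
    using disjoint_paths_height_less[OF even_Pt even_Pt disj, of "- int i" t] ends assms(3,4)
    by (simp add: Pt_def)
qed

lemma X_no_asc:
  assumes "\<sigma> \<in> X (int m)" and "i \<le> m" and "n_asc (\<sigma> i) = 0"
  shows "\<sigma> i = replicate i Flat" and "path_height \<sigma> i t = int i"
proof -
  show r: "\<sigma> i = replicate i Flat"
    using X_step_counts[OF assms(1,2)] assms(3) replicate_Flat_if_no_asc_desc[of "\<sigma> i"] by simp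
  show "path_height \<sigma> i t = int i"
    by (subst r) (simp add: height_replicate_Flat Pt_def)
qed

lemma X_path_height_lower_bound_Suc:
  assumes X: "\<sigma> \<in> X (int m)" and "Suc k \<le> m"
    and lower: "\<And>t. - int k \<le> t \<Longrightarrow> t \<le> int k \<Longrightarrow> int k \<le> path_height \<sigma> k t"
    and "- int (Suc k) \<le> t" "t \<le> int (Suc k)"
  shows "int (Suc k) \<le> path_height \<sigma> (Suc k) t"
proof -
  consider "t = - int (Suc k)" | "t = int (Suc k)" | "- int k \<le> t \<and> t \<le> int k"
    using assms(4,5) by linarith
  then show ?thesis
  proof cases
    case 3
    then show ?thesis using X_path_height_less_Suc[OF X, of k t] lower[of t] assms(2) by simp
  qed (use path_height_start[of "Suc k" \<sigma>] X_path_height_end[OF X assms(2)] in simp_all)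
qed

lemma X_path_height_above_flat:
  assumes X: "\<sigma> \<in> X (int m)" and "i \<le> m" and flat: "n_asc (\<sigma> (i - 1)) = 0"
    and "- int i \<le> t" "t \<le> int i"
  shows "int i \<le> path_height \<sigma> i t"
proof (cases i)
  case 0 then show ?thesis using X_no_asc(2)[OF X, of 0] X_no_asc_0[OF X] by simp
next
  case (Suc l)
  then show ?thesis
    using X_path_height_lower_bound_Suc[OF X, of l] X_no_asc(2)[OF X _ flat] assms(2,4,5) by simp
qed

fun heights :: "int \<Rightarrow> sstep list \<Rightarrow> int set" where
  "heights y [] = {y}"
| "heights y (Asc # ss) = insert y (heights (y + 1) ss)"
| "heights y (Desc # ss) = insert y (heights (y - 1) ss)"
| "heights y (Flat # ss) = insert y (heights y ss)"

lemma start_in_heights: "y \<in> heights y ss"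
proof (cases ss)
  case (Cons s ss') then show ?thesis by (cases s) auto
qed simp

lemma snd_verts: "snd ` set (verts p ss) = heights (snd p) ss"
proof (induction ss arbitrary: p)
  case (Cons s ss) then show ?case by (cases s; cases p) auto
qed simp

lemma heights_replicate_Flat: "heights y (replicate n Flat) = {y}"
  by (induction n) auto

lemma no_asc_if_heights_subset_singleton: "heights y ss \<subseteq> {y} \<Longrightarrow> n_asc ss = 0"
proof (induction ss arbitrary: y)
  case (Cons s ss)
  then show ?case using start_in_heights[of "y + 1" ss] start_in_heights[of "y - 1" ss] by (cases s) auto
qed simp

lemma disjoint_verts_if_heights_disjoint:
  "heights (snd p1) ss1 \<inter> heights (snd p2) ss2 = {} \<Longrightarrow> set (verts p1 ss1) \<inter> set (verts p2 ss2) = {}"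
  using snd_verts[of p1 ss1] snd_verts[of p2 ss2] by auto

lemma X_heights:
  assumes "\<sigma> \<in> X (int m)" and "i \<le> m"
  shows "heights (int i) (\<sigma> i) = (\<lambda>t. path_height \<sigma> i t) ` (fst ` set (verts (Pt i) (\<sigma> i)))"
  using snd_verts[of "Pt i" "\<sigma> i"] X_verts(3)[OF assms] by (force simp: Pt_def)

lemma X_heights_ge:
  assumes "\<sigma> \<in> X (int m)" and "i \<le> m"
    and "\<And>t. - int i \<le> t \<Longrightarrow> t \<le> int i \<Longrightarrow> int i \<le> path_height \<sigma> i t"
  shows "\<forall>y \<in> heights (int i) (\<sigma> i). int i \<le> y"
  using X_heights[OF assms(1,2)] X_verts(1,2)[OF assms(1,2)] assms(3) by auto

lemma X_no_asc_if_level: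
  assumes "\<sigma> \<in> X (int m)" and "i \<le> m"
    and "\<And>t. - int i \<le> t \<Longrightarrow> t \<le> int i \<Longrightarrow> path_height \<sigma> i t = int i"
  shows "n_asc (\<sigma> i) = 0"
proof (rule no_asc_if_heights_subset_singleton)
  show "heights (int i) (\<sigma> i) \<subseteq> {int i}"
    using X_heights[OF assms(1,2)] X_verts(1,2)[OF assms(1,2)] assms(3) by auto
qed

section \<open>Expansion by the number of ascents\<close>

definition total_asc :: "nat \<Rightarrow> (nat \<Rightarrow> sstep list) \<Rightarrow> nat" where
  "total_asc m \<sigma> = (\<Sum>i\<le>m. n_asc (\<sigma> i))"

lemma sum_n_asc_le_total_asc: "I \<subseteq> {..m} \<Longrightarrow> (\<Sum>i\<in>I. n_asc (\<sigma> i)) \<le> total_asc m \<sigma>"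
  unfolding total_asc_def by (rule sum_mono2) auto

text \<open>With at most two ascents in total, a path with ascents sits directly below another one:
  otherwise it would be squeezed between a flat path above it and a path below it that stays
  weakly above its own level, so it would be flat itself.\<close>
lemma X_asc_propagates:
  assumes X: "\<sigma> \<in> X (int m)" and few: "total_asc m \<sigma> \<le> 2" and "i < m" and asc: "n_asc (\<sigma> i) \<noteq> 0"
  shows "n_asc (\<sigma> (Suc i)) \<noteq> 0"
proof
  assume flat: "n_asc (\<sigma> (Suc i)) = 0"
  have upper: "path_height \<sigma> i t \<le> int i" if "- int i \<le> t" "t \<le> int i" for t
    using X_path_height_less_Suc[OF X \<open>i < m\<close> that] X_no_asc(2)[OF X _ flat] \<open>i < m\<close> by simp
  obtain k where k: "i = Suc k" using asc X_no_asc_0[OF X] by (cases i) auto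
  have "n_asc (\<sigma> k) = 0"
  proof (rule X_no_asc_if_level[OF X])
    have "n_asc (\<sigma> (k - 1)) = 0" if k_asc: "n_asc (\<sigma> k) \<noteq> 0"
    proof -
      obtain l where l: "k = Suc l" using k_asc X_no_asc_0[OF X] by (cases k) auto
      have "n_asc (\<sigma> l) + n_asc (\<sigma> k) + n_asc (\<sigma> i) \<le> total_asc m \<sigma>"
        using sum_n_asc_le_total_asc[of "{l, k, i}" m \<sigma>] k l \<open>i < m\<close> by simp
      then show ?thesis using few k_asc asc l by simp
    qed
    then have k_lower: "int k \<le> path_height \<sigma> k t" if "- int k \<le> t" "t \<le> int k" for t
      using X_path_height_above_flat[OF X _ _ that] X_no_asc(2)[OF X, of k] k \<open>i < m\<close>
      by (cases "n_asc (\<sigma> k) = 0") auto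
    show "path_height \<sigma> k t = int k" if "- int k \<le> t" "t \<le> int k" for t
      using k_lower[OF that] X_path_height_less_Suc[OF X, of k t] upper[of t] that k \<open>i < m\<close> by simp
  qed (use k \<open>i < m\<close> in simp)
  then have "int i \<le> path_height \<sigma> i t" if "- int i \<le> t" "t \<le> int i" for t
    using X_path_height_above_flat[OF X _ _ that] k \<open>i < m\<close> by simp
  then have "n_asc (\<sigma> i) = 0"
    using X_no_asc_if_level[OF X, of i] upper \<open>i < m\<close> by force
  then show False using asc by simp
qed

lemma X_no_asc_below_top_two:
  assumes X: "\<sigma> \<in> X (int m)" and few: "total_asc m \<sigma> \<le> 2" and "i + 2 \<le> m"
  shows "n_asc (\<sigma> i) = 0"
proof (rule ccontr)
  assume asc: "n_asc (\<sigma> i) \<noteq> 0"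
  then have "n_asc (\<sigma> (Suc i)) \<noteq> 0" "n_asc (\<sigma> (Suc (Suc i))) \<noteq> 0"
    using X_asc_propagates[OF X few] assms(3) by auto
  moreover have "n_asc (\<sigma> i) + n_asc (\<sigma> (Suc i)) + n_asc (\<sigma> (Suc (Suc i))) \<le> total_asc m \<sigma>"
    using sum_n_asc_le_total_asc[of "{i, Suc i, Suc (Suc i)}" m \<sigma>] assms(3) by simp
  ultimately show False using few asc by linarith
qed

fun desc_weight :: "(int \<Rightarrow> real) \<Rightarrow> int \<Rightarrow> sstep list \<Rightarrow> real" where
  "desc_weight d y [] = 1"
| "desc_weight d y (Asc # ss) = desc_weight d (y + 1) ss"
| "desc_weight d y (Desc # ss) = d y * desc_weight d (y - 1) ss"
| "desc_weight d y (Flat # ss) = desc_weight d y ss"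

lemma pathW_eq_power_desc_weight: "pathW d R p ss = R ^ n_flat ss * desc_weight d (snd p) ss"
proof (induction ss arbitrary: p)
  case (Cons s ss) then show ?case by (cases s; cases p) auto
qed simp

lemma desc_weight_replicate_Flat: "desc_weight d y (replicate n Flat) = 1"
  by (induction n) auto

definition family_weight :: "(int \<Rightarrow> real) \<Rightarrow> nat \<Rightarrow> (nat \<Rightarrow> sstep list) \<Rightarrow> real" where
  "family_weight d m \<sigma> = (\<Prod>i\<le>m. desc_weight d (int i) (\<sigma> i))"

definition tri :: "nat \<Rightarrow> nat" where
  "tri m = (\<Sum>i\<le>m. i)"

lemma double_tri: "2 * tri m = m * (m + 1)"
  by (induction m) (auto simp: tri_def)

lemma tri_Suc: "tri (Suc m) = tri m + Suc m"
  by (simp add: tri_def)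

lemma tri_0: "tri 0 = 0"
  by (simp add: tri_def)

lemma tri_eq_0_iff: "tri m = 0 \<longleftrightarrow> m = 0"
  by (cases m) (simp_all add: tri_Suc tri_0)

lemma tri_le_1_iff: "tri m \<le> 1 \<longleftrightarrow> m \<le> 1"
  by (cases m) (auto simp: tri_Suc tri_eq_0_iff tri_0)

lemma prod_pathW_eq_power_desc_weight:
  assumes X: "\<sigma> \<in> X (int m)"
  shows "(\<Prod>i\<le>m. pathW d R (Pt i) (\<sigma> i)) = family_weight d m \<sigma> * R ^ (tri m - total_asc m \<sigma>)"
proof -
  have "(\<Sum>i\<le>m. n_flat (\<sigma> i)) + total_asc m \<sigma> = tri m"
    unfolding total_asc_def tri_def sum.distrib[symmetric]
    by (rule sum.cong) (use X_step_counts[OF X] in auto)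
  then have flats: "(\<Sum>i\<le>m. n_flat (\<sigma> i)) = tri m - total_asc m \<sigma>" by simp
  have "(\<Prod>i\<le>m. pathW d R (Pt i) (\<sigma> i)) = (\<Prod>i\<le>m. R ^ n_flat (\<sigma> i)) * family_weight d m \<sigma>"
    by (simp add: pathW_eq_power_desc_weight Pt_def prod.distrib family_weight_def)
  also have "\<dots> = family_weight d m \<sigma> * R ^ (tri m - total_asc m \<sigma>)"
    by (simp add: power_sum[symmetric] flats)
  finally show ?thesis .
qed

lemma X_finite: "finite (X (int m))"
proof -
  let ?L = "{ss. set ss \<subseteq> {Asc, Desc, Flat} \<and> length ss \<le> 2 * m}"
  let ?F = "{\<sigma>. \<forall>i. (i \<in> {..m} \<longrightarrow> \<sigma> i \<in> ?L) \<and> (i \<notin> {..m} \<longrightarrow> \<sigma> i = [])}"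
  have steps: "s \<in> {Asc, Desc, Flat}" for s
    by (cases s) auto
  have "\<sigma> \<in> ?F" if X: "\<sigma> \<in> X (int m)" for \<sigma>
  proof -
    have "length (\<sigma> i) \<le> 2 * m" if "i \<le> m" for i
      using X_length[OF X that] X_step_counts(2)[OF X that] that by linarith
    then show ?thesis using X_outside[OF X] steps by (auto simp: not_le)
  qed
  moreover have "finite ?L" by (rule finite_lists_length_le) simp
  then have "finite ?F" by (intro finite_set_of_finite_funs) auto
  ultimately show ?thesis by (meson finite_subset subsetI)
qed

definition asc_coeff :: "(int \<Rightarrow> real) \<Rightarrow> nat \<Rightarrow> nat \<Rightarrow> real" where
  "asc_coeff d m k = (\<Sum>\<sigma>\<in>{\<sigma>\<in>X (int m). total_asc m \<sigma> = k}. family_weight d m \<sigma>)"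

definition asc_tail :: "(int \<Rightarrow> real) \<Rightarrow> nat \<Rightarrow> real poly" where
  "asc_tail d m =
     (\<Sum>\<sigma>\<in>{\<sigma>\<in>X (int m). 3 \<le> total_asc m \<sigma>}. monom (family_weight d m \<sigma>) (tri m - total_asc m \<sigma>))"

lemma asc_tail_bigO: "bigO_poly (asc_tail d m) (int (tri m) - 3)"
proof (cases "tri m < 3")
  case True
  have "total_asc m \<sigma> \<le> tri m" if "\<sigma> \<in> X (int m)" for \<sigma>
    unfolding total_asc_def tri_def by (rule sum_mono) (use X_step_counts[OF that] in fastforce)
  then have "{\<sigma>\<in>X (int m). 3 \<le> total_asc m \<sigma>} = {}" using True by fastforce
  then have "asc_tail d m = 0" unfolding asc_tail_def by (simp only: sum.empty)
  then show ?thesis by (simp add: bigO_poly_def)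
next
  case False
  have "degree (asc_tail d m) \<le> tri m - 3"
    unfolding asc_tail_def
    by (rule degree_sum_le) (auto simp: X_finite intro: order.trans[OF degree_monom_le])
  then show ?thesis using False by (simp add: bigO_poly_def nat_diff_distrib)
qed

lemma sum_atMost_3: "(\<Sum>k\<le>3::nat. g k) = g 0 + g 1 + g 2 + (g 3 :: 'a :: comm_monoid_add)"
  by (simp add: eval_nat_numeral atMost_Suc ac_simps)

lemma sum_X_weight_by_total_asc:
  "(\<Sum>\<sigma>\<in>X (int m). \<Prod>i\<le>m. pathW d R (Pt i) (\<sigma> i)) =
     asc_coeff d m 0 * R ^ tri m + asc_coeff d m 1 * R ^ (tri m - 1)
     + asc_coeff d m 2 * R ^ (tri m - 2) + poly (asc_tail d m) R"
proof -
  let ?f = "\<lambda>\<sigma>. family_weight d m \<sigma> * R ^ (tri m - total_asc m \<sigma>)"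
  let ?part = "\<lambda>k. {\<sigma> \<in> X (int m). min (total_asc m \<sigma>) 3 = k}"
  have part: "?part k = {\<sigma>\<in>X (int m). total_asc m \<sigma> = k}" if "k < 3" for k
    using that by (auto simp: min_def)
  have "(\<Sum>\<sigma>\<in>X (int m). \<Prod>i\<le>m. pathW d R (Pt i) (\<sigma> i)) = sum ?f (X (int m))"
    by (rule sum.cong) (simp_all add: prod_pathW_eq_power_desc_weight)
  also have "\<dots> = (\<Sum>k\<le>3. sum ?f (?part k))"
    by (rule sum.group[symmetric]) (auto simp: X_finite)
  also have "\<dots> = sum ?f (?part 0) + sum ?f (?part 1) + sum ?f (?part 2) + sum ?f (?part 3)"
    using sum_atMost_3[of "\<lambda>k. sum ?f (?part k)"] .
  also have "?part 3 = {\<sigma>\<in>X (int m). 3 \<le> total_asc m \<sigma>}"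
    by (auto simp: min_def)
  finally show ?thesis
    by (simp add: part asc_coeff_def asc_tail_def sum_distrib_right poly_sum poly_monom)
qed

section \<open>Families with a single non-flat path\<close>

definition remove_flats :: "sstep list \<Rightarrow> sstep list" where
  "remove_flats ss = filter (\<lambda>s. s \<noteq> Flat) ss"

lemma remove_flats_simps [simp]:
  "remove_flats [] = []" "remove_flats (Flat # ss) = remove_flats ss"
  "remove_flats (Asc # ss) = Asc # remove_flats ss" "remove_flats (Desc # ss) = Desc # remove_flats ss"
  by (auto simp: remove_flats_def)

lemma remove_flats_Cons: "remove_flats (s # ss) = (if s = Flat then remove_flats ss else s # remove_flats ss)"
  by (simp add: remove_flats_def)

lemma remove_flats_append: "remove_flats (xs @ ys) = remove_flats xs @ remove_flats ys"
  by (simp add: remove_flats_def)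

lemma remove_flats_replicate_Flat: "remove_flats (replicate n Flat) = []"
  by (simp add: remove_flats_def)

lemma Flat_notin_remove_flats: "Flat \<notin> set (remove_flats ss)"
  by (simp add: remove_flats_def)

lemma step_counts_remove_flats:
  "n_asc (remove_flats ss) = n_asc ss" "n_desc (remove_flats ss) = n_desc ss"
  "length ss = length (remove_flats ss) + n_flat ss"
  by (induction ss) (auto simp: remove_flats_def)

lemma heights_remove_flats: "heights y (remove_flats ss) = heights y ss"
proof (induction ss arbitrary: y)
  case (Cons s ss) then show ?case by (cases s) (auto simp: start_in_heights insert_absorb)
qed simp

lemma desc_weight_remove_flats: "desc_weight d y (remove_flats ss) = desc_weight d y ss"
proof (induction ss arbitrary: y)
  case (Cons s ss) then show ?case by (cases s) auto
qed simp

lemma remove_flats_eq_Nil: "remove_flats ss = [] \<Longrightarrow> ss = replicate (length ss) Flat"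
proof (induction ss)
  case (Cons s ss) then show ?case by (cases s) auto
qed simp

lemma remove_flats_eq_Cons:
  "remove_flats ss = c # w \<Longrightarrow> \<exists>n rest. ss = replicate n Flat @ c # rest \<and> remove_flats rest = w"
proof (induction ss)
  case (Cons s ss)
  show ?case
  proof (cases s)
    case Flat
    then obtain n rest where "ss = replicate n Flat @ c # rest" "remove_flats rest = w"
      using Cons by auto
    then show ?thesis using Flat by (intro exI[of _ "Suc n"] exI[of _ rest]) auto
  qed (use Cons.prems in \<open>auto intro: exI[of _ 0]\<close>)
qed simp

definition flat_insertions :: "nat \<Rightarrow> sstep list \<Rightarrow> sstep list set" where
  "flat_insertions L w = {ss. length ss = L \<and> remove_flats ss = w}"

lemma flat_insertions_0: "flat_insertions 0 w = (if w = [] then {[]} else {})"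
  by (auto simp: flat_insertions_def)

lemma flat_insertions_Suc:
  assumes "Flat \<notin> set w"
  shows "flat_insertions (Suc L) w =
    Cons Flat ` flat_insertions L w \<union> (if w = [] then {} else Cons (hd w) ` flat_insertions L (tl w))"
  (is "?lhs = ?rhs")
proof
  show "?lhs \<subseteq> ?rhs"
  proof
    fix ss assume "ss \<in> ?lhs"
    then obtain s ss' where "ss = s # ss'" "length ss' = L" "remove_flats (s # ss') = w"
      by (cases ss) (auto simp: flat_insertions_def)
    then show "ss \<in> ?rhs" by (cases s) (auto simp: flat_insertions_def)
  qed
  have "hd w \<noteq> Flat" if "w \<noteq> []" using assms that by (cases w) auto
  then show "?rhs \<subseteq> ?lhs"
    by (cases w) (auto simp: flat_insertions_def remove_flats_Cons)
qed

lemma card_flat_insertions: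
  "Flat \<notin> set w \<Longrightarrow> finite (flat_insertions L w) \<and> card (flat_insertions L w) = L choose length w"
proof (induction L arbitrary: w)
  case 0 then show ?case by (simp add: flat_insertions_0)
next
  case (Suc L)
  show ?case
  proof (cases w)
    case Nil
    then show ?thesis using flat_insertions_Suc[OF Suc.prems] Suc.IH[OF Suc.prems]
      by (simp add: card_image)
  next
    case (Cons c w')
    have c: "c \<noteq> Flat" "Flat \<notin> set w'" using Suc.prems Cons by auto
    have split: "flat_insertions (Suc L) w = Cons Flat ` flat_insertions L w \<union> Cons c ` flat_insertions L w'"
      using flat_insertions_Suc[OF Suc.prems] Cons by simp
    have "Cons Flat ` flat_insertions L w \<inter> Cons c ` flat_insertions L w' = {}" using c by auto
    then show ?thesis
      unfolding split using Suc.IH[OF Suc.prems] Suc.IH[OF c(2)] Cons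
      by (simp add: card_Un_disjoint card_image)
  qed
qed

lemma X_intro:
  assumes "\<And>i. m < i \<Longrightarrow> \<sigma> i = []" and "\<And>i. i \<le> m \<Longrightarrow> endpt (Pt i) (\<sigma> i) = Qt i"
    and "\<And>i j. i \<le> m \<Longrightarrow> j \<le> m \<Longrightarrow> i \<noteq> j \<Longrightarrow>
      set (verts (Pt i) (\<sigma> i)) \<inter> set (verts (Pt j) (\<sigma> j)) = {}"
  shows "\<sigma> \<in> X (int m)"
proof -
  have "(\<lambda>i. endpt (Pt i) (\<sigma> i)) ` {..m} = Qt ` {..m}" using assms(2) by (rule image_cong[OF refl]) simp
  then show ?thesis unfolding X_def using assms(1,3) by auto
qed

lemma endpt_Pt: "n_asc ss = n_desc ss \<Longrightarrow> n_asc ss + n_flat ss = i \<Longrightarrow> endpt (Pt i) ss = Qt i"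
  using fst_endpt[of "Pt i" ss] snd_endpt[of "Pt i" ss] by (simp add: Pt_def Qt_def prod_eq_iff)

definition top_family :: "nat \<Rightarrow> sstep list \<Rightarrow> nat \<Rightarrow> sstep list" where
  "top_family m ss i = (if i = m then ss else if i < m then replicate i Flat else [])"

lemma inj_top_family: "inj (top_family m)"
  by (rule injI) (metis top_family_def)

lemma total_asc_top_family: "total_asc m (top_family m ss) = n_asc ss"
proof -
  have "total_asc m (top_family m ss) = (\<Sum>i\<le>m. if i = m then n_asc ss else 0)"
    unfolding total_asc_def by (rule sum.cong) (auto simp: top_family_def)
  then show ?thesis by simp
qed

lemma family_weight_top_family: "family_weight d m (top_family m ss) = desc_weight d (int m) ss"
proof -
  have "family_weight d m (top_family m ss) = (\<Prod>i\<le>m. if i = m then desc_weight d (int m) ss else 1)"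
    unfolding family_weight_def by (rule prod.cong) (auto simp: top_family_def desc_weight_replicate_Flat)
  then show ?thesis by simp
qed

lemma top_family_in_X:
  assumes w: "Flat \<notin> set w" "n_asc w = n_desc w" "\<forall>y\<in>heights (int m) w. int m \<le> y"
    and ss: "ss \<in> flat_insertions (m + n_asc w) w"
  shows "top_family m ss \<in> X (int m)" and "total_asc m (top_family m ss) = n_asc w"
    and "family_weight d m (top_family m ss) = desc_weight d (int m) w"
proof -
  have ss': "remove_flats ss = w" "length ss = m + n_asc w"
    using ss by (auto simp: flat_insertions_def)
  have counts: "n_asc ss = n_asc w" "n_desc ss = n_desc w" "n_asc ss + n_flat ss = m"
    using step_counts_remove_flats[of ss] length_eq_step_counts[of w] ss' w(1,2) by auto
  show "top_family m ss \<in> X (int m)"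
  proof (rule X_intro)
    show "endpt (Pt i) (top_family m ss i) = Qt i" if "i \<le> m" for i
      using that counts w(2) endpt_Pt[of "replicate i Flat" i]
      by (auto simp: top_family_def intro: endpt_Pt)
    have hs: "heights (snd (Pt i)) (top_family m ss i) \<subseteq> (if i = m then {int m..} else {int i})"
      if "i \<le> m" for i
      using that w(3) heights_remove_flats[of "int m" ss] ss'
      by (auto simp: top_family_def Pt_def heights_replicate_Flat)
    show "set (verts (Pt i) (top_family m ss i)) \<inter> set (verts (Pt j) (top_family m ss j)) = {}"
      if "i \<le> m" "j \<le> m" "i \<noteq> j" for i j
      using hs[OF that(1)] hs[OF that(2)] that
      by (intro disjoint_verts_if_heights_disjoint) (auto split: if_splits)
  qed (simp add: top_family_def)
  show "total_asc m (top_family m ss) = n_asc w" using counts by (simp add: total_asc_top_family)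
  show "family_weight d m (top_family m ss) = desc_weight d (int m) w"
    using desc_weight_remove_flats[of d "int m" ss] ss' by (simp add: family_weight_top_family)
qed

lemma sum_family_weight_top_family:
  assumes "Flat \<notin> set w" "n_asc w = n_desc w" "\<forall>y\<in>heights (int m) w. int m \<le> y"
  shows "(\<Sum>\<sigma>\<in>top_family m ` flat_insertions (m + n_asc w) w. family_weight d m \<sigma>)
    = real ((m + n_asc w) choose length w) * desc_weight d (int m) w"
proof -
  have "(\<Sum>\<sigma>\<in>top_family m ` flat_insertions (m + n_asc w) w. family_weight d m \<sigma>)
      = (\<Sum>ss\<in>flat_insertions (m + n_asc w) w. family_weight d m (top_family m ss))"
    by (rule sum.reindex[unfolded comp_def]) (meson inj_top_family inj_on_subset subset_UNIV)
  also have "\<dots> = (\<Sum>ss\<in>flat_insertions (m + n_asc w) w. desc_weight d (int m) w)"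
    by (rule sum.cong) (use top_family_in_X[OF assms] in auto)
  finally show ?thesis using card_flat_insertions[OF assms(1)] by simp
qed

lemma X_eq_top_family:
  assumes X: "\<sigma> \<in> X (int m)" and below: "\<And>i. i < m \<Longrightarrow> n_asc (\<sigma> i) = 0"
  shows "\<sigma> = top_family m (\<sigma> m)"
proof
  show "\<sigma> i = top_family m (\<sigma> m) i" for i
    using X_outside[OF X, of i] X_no_asc(1)[OF X _ below[of i]] by (auto simp: top_family_def)
qed

definition dyck_words :: "int \<Rightarrow> nat \<Rightarrow> sstep list set" where
  "dyck_words y k = {w. Flat \<notin> set w \<and> length w = 2 * k \<and> n_asc w = k \<and> (\<forall>h\<in>heights y w. y \<le> h)}"

lemma dyck_words_balanced:
  assumes "w \<in> dyck_words y k"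
  shows "n_desc w = n_asc w"
proof -
  have "Flat \<notin> set w" "length w = 2 * k" "n_asc w = k" using assms by (auto simp: dyck_words_def)
  then show ?thesis using length_eq_step_counts[of w] by simp
qed

lemma X_path_dyck:
  assumes X: "\<sigma> \<in> X (int m)" and "i \<le> m"
    and lower: "\<And>t. - int i \<le> t \<Longrightarrow> t \<le> int i \<Longrightarrow> int i \<le> path_height \<sigma> i t"
  shows "remove_flats (\<sigma> i) \<in> dyck_words (int i) (n_asc (\<sigma> i))"
    and "\<sigma> i \<in> flat_insertions (i + n_asc (\<sigma> i)) (remove_flats (\<sigma> i))"
proof -
  have "\<forall>y\<in>heights (int i) (remove_flats (\<sigma> i)). int i \<le> y"
    using X_heights_ge[OF X assms(2) lower] heights_remove_flats by simp
  moreover have "n_desc (\<sigma> i) = n_asc (\<sigma> i)" "length (\<sigma> i) = i + n_asc (\<sigma> i)"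
    using X_step_counts(1)[OF X assms(2)] X_length[OF X assms(2)] by simp_all
  ultimately show "remove_flats (\<sigma> i) \<in> dyck_words (int i) (n_asc (\<sigma> i))"
    and "\<sigma> i \<in> flat_insertions (i + n_asc (\<sigma> i)) (remove_flats (\<sigma> i))"
    using step_counts_remove_flats[of "\<sigma> i"] length_eq_step_counts[of "\<sigma> i"] Flat_notin_remove_flats
    by (auto simp: flat_insertions_def dyck_words_def)
qed

lemma dyck_words_0: "dyck_words y 0 = {[]}"
  by (auto simp: dyck_words_def)

lemma dyck_words_1: "dyck_words y 1 = {[Asc, Desc]}"
proof -
  have "w = [Asc, Desc]" if "w \<in> dyck_words y 1" for w
  proof -
    from that obtain a b where "w = [a, b]"
      by (auto simp: dyck_words_def length_Suc_conv numeral_eq_Suc)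
    with that show ?thesis by (cases a; cases b) (auto simp: dyck_words_def)
  qed
  then show ?thesis by (auto simp: dyck_words_def)
qed

lemma dyck_words_2: "dyck_words y 2 = {[Asc, Asc, Desc, Desc], [Asc, Desc, Asc, Desc]}"
proof -
  have "w \<in> {[Asc, Asc, Desc, Desc], [Asc, Desc, Asc, Desc]}" if "w \<in> dyck_words y 2" for w
  proof -
    from that obtain a b c e where "w = [a, b, c, e]"
      by (auto simp: dyck_words_def length_Suc_conv numeral_eq_Suc)
    with that show ?thesis by (cases a; cases b; cases c; cases e) (auto simp: dyck_words_def)
  qed
  then show ?thesis by (auto simp: dyck_words_def)
qed

lemma X_top_families_eq:
  "{\<sigma>\<in>X (int m). total_asc m \<sigma> = k \<and> (\<forall>i<m. n_asc (\<sigma> i) = 0)}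
    = (\<Union>w\<in>dyck_words (int m) k. top_family m ` flat_insertions (m + k) w)"
proof (intro equalityI subsetI)
  fix \<sigma> assume "\<sigma> \<in> {\<sigma>\<in>X (int m). total_asc m \<sigma> = k \<and> (\<forall>i<m. n_asc (\<sigma> i) = 0)}"
  then have X: "\<sigma> \<in> X (int m)" and k: "total_asc m \<sigma> = k" and below: "\<And>i. i < m \<Longrightarrow> n_asc (\<sigma> i) = 0"
    by auto
  have top: "\<sigma> = top_family m (\<sigma> m)" by (rule X_eq_top_family[OF X below])
  then have "n_asc (\<sigma> m) = k" using k total_asc_top_family by metis
  moreover have "n_asc (\<sigma> (m - 1)) = 0" using below X_no_asc_0[OF X] by (cases m) auto
  ultimately show "\<sigma> \<in> (\<Union>w\<in>dyck_words (int m) k. top_family m ` flat_insertions (m + k) w)"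
    using X_path_dyck[OF X order.refl X_path_height_above_flat[OF X order.refl]] top by blast
next
  fix \<sigma> assume "\<sigma> \<in> (\<Union>w\<in>dyck_words (int m) k. top_family m ` flat_insertions (m + k) w)"
  then obtain w ss where w: "w \<in> dyck_words (int m) k" and ss: "ss \<in> flat_insertions (m + k) w"
    and \<sigma>: "\<sigma> = top_family m ss" by blast
  have "Flat \<notin> set w" "n_asc w = n_desc w" "\<forall>y\<in>heights (int m) w. int m \<le> y" "n_asc w = k"
    using w dyck_words_balanced[OF w] by (auto simp: dyck_words_def)
  then show "\<sigma> \<in> {\<sigma>\<in>X (int m). total_asc m \<sigma> = k \<and> (\<forall>i<m. n_asc (\<sigma> i) = 0)}"
    using top_family_in_X[of w m ss] ss \<sigma> by (auto simp: top_family_def)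
qed

lemma sum_family_weight_top_families:
  assumes "finite (dyck_words (int m) k)"
  shows "(\<Sum>\<sigma>\<in>{\<sigma>\<in>X (int m). total_asc m \<sigma> = k \<and> (\<forall>i<m. n_asc (\<sigma> i) = 0)}. family_weight d m \<sigma>)
    = real (m + k choose (2 * k)) * (\<Sum>w\<in>dyck_words (int m) k. desc_weight d (int m) w)"
proof -
  have words: "Flat \<notin> set w" "n_asc w = n_desc w" "\<forall>y\<in>heights (int m) w. int m \<le> y"
    "n_asc w = k" "length w = 2 * k" if "w \<in> dyck_words (int m) k" for w
    using that dyck_words_balanced[OF that] by (auto simp: dyck_words_def)
  have disj: "top_family m ` flat_insertions (m + k) w \<inter> top_family m ` flat_insertions (m + k) w' = {}"
    if "w \<noteq> w'" for w w'
    using that inj_top_family[of m] by (auto simp: flat_insertions_def dest: injD)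
  have fin: "finite (top_family m ` flat_insertions (m + k) w)" if "w \<in> dyck_words (int m) k" for w
    using card_flat_insertions[OF words(1)[OF that]] by simp
  have "(\<Sum>\<sigma>\<in>(\<Union>w\<in>dyck_words (int m) k. top_family m ` flat_insertions (m + k) w). family_weight d m \<sigma>)
      = (\<Sum>w\<in>dyck_words (int m) k. \<Sum>\<sigma>\<in>top_family m ` flat_insertions (m + k) w. family_weight d m \<sigma>)"
    using assms fin disj by (intro sum.UNION_disjoint) auto
  also have "\<dots> = (\<Sum>w\<in>dyck_words (int m) k. real (m + k choose (2 * k)) * desc_weight d (int m) w)"
  proof (rule sum.cong)
    fix w assume "w \<in> dyck_words (int m) k"
    from words[OF this] sum_family_weight_top_family[of w m d, OF words(1-3)[OF this]]
    show "(\<Sum>\<sigma>\<in>top_family m ` flat_insertions (m + k) w. family_weight d m \<sigma>)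
      = real (m + k choose (2 * k)) * desc_weight d (int m) w" by simp
  qed simp
  finally show ?thesis unfolding X_top_families_eq by (simp add: sum_distrib_left)
qed

lemma X_total_asc_le_1_top_only:
  assumes X: "\<sigma> \<in> X (int m)" and "total_asc m \<sigma> \<le> 1" and "i < m"
  shows "n_asc (\<sigma> i) = 0"
proof (rule ccontr)
  assume asc: "n_asc (\<sigma> i) \<noteq> 0"
  then have "n_asc (\<sigma> (Suc i)) \<noteq> 0" using X_asc_propagates[OF X] assms(2,3) by simp
  moreover have "n_asc (\<sigma> i) + n_asc (\<sigma> (Suc i)) \<le> total_asc m \<sigma>"
    using sum_n_asc_le_total_asc[of "{i, Suc i}" m \<sigma>] assms(3) by simp
  ultimately show False using asc assms(2) by linarith
qed

lemma X_total_asc_2_top_only_iff: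
  assumes X: "\<sigma> \<in> X (int m)" and "total_asc m \<sigma> = 2"
  shows "(\<forall>i<m. n_asc (\<sigma> i) = 0) \<longleftrightarrow> n_asc (\<sigma> (m - 1)) = 0"
proof
  assume second: "n_asc (\<sigma> (m - 1)) = 0"
  show "\<forall>i<m. n_asc (\<sigma> i) = 0"
  proof (intro allI impI)
    fix i assume "i < m"
    then consider "i + 2 \<le> m" | "i = m - 1" by linarith
    then show "n_asc (\<sigma> i) = 0"
      by cases (use X_no_asc_below_top_two[OF X] assms(2) second in auto)
  qed
next
  assume "\<forall>i<m. n_asc (\<sigma> i) = 0"
  then show "n_asc (\<sigma> (m - 1)) = 0" using X_no_asc_0[OF X] by (cases m) auto
qed

lemma asc_coeff_0: "asc_coeff d m 0 = 1"
proof -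
  have "{\<sigma>\<in>X (int m). total_asc m \<sigma> = 0} = {\<sigma>\<in>X (int m). total_asc m \<sigma> = 0 \<and> (\<forall>i<m. n_asc (\<sigma> i) = 0)}"
    using X_total_asc_le_1_top_only by auto
  then show ?thesis
    using sum_family_weight_top_families[of m 0 d, unfolded dyck_words_0] by (simp add: asc_coeff_def)
qed

lemma asc_coeff_1: "asc_coeff d m 1 = real (Suc m choose 2) * d (int m + 1)"
proof -
  have "{\<sigma>\<in>X (int m). total_asc m \<sigma> = 1} = {\<sigma>\<in>X (int m). total_asc m \<sigma> = 1 \<and> (\<forall>i<m. n_asc (\<sigma> i) = 0)}"
    using X_total_asc_le_1_top_only by auto
  then show ?thesis
    using sum_family_weight_top_families[of m 1 d, unfolded dyck_words_1] by (simp add: asc_coeff_def)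
qed

lemma sum_family_weight_total_asc_2_top_only:
  "(\<Sum>\<sigma>\<in>{\<sigma>\<in>X (int m). total_asc m \<sigma> = 2 \<and> n_asc (\<sigma> (m - 1)) = 0}. family_weight d m \<sigma>)
    = real (m + 2 choose 4) * (d (int m + 2) * d (int m + 1) + d (int m + 1) * d (int m + 1))"
proof -
  have "{\<sigma>\<in>X (int m). total_asc m \<sigma> = 2 \<and> n_asc (\<sigma> (m - 1)) = 0}
      = {\<sigma>\<in>X (int m). total_asc m \<sigma> = 2 \<and> (\<forall>i<m. n_asc (\<sigma> i) = 0)}"
    using X_total_asc_2_top_only_iff by blast
  then show ?thesis
    using sum_family_weight_top_families[of m 2 d, unfolded dyck_words_2] by (simp add: algebra_simps)
qed

section \<open>Nested humps on the two top paths\<close>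

definition hump :: "nat \<Rightarrow> nat \<Rightarrow> nat \<Rightarrow> sstep list" where
  "hump L i j = replicate i Flat @ Asc # replicate (j - i - 1) Flat @ Desc # replicate (L - j - 1) Flat"

lemma hump_in_flat_insertions: "i < j \<Longrightarrow> j < L \<Longrightarrow> hump L i j \<in> flat_insertions L [Asc, Desc]"
  by (simp add: hump_def flat_insertions_def remove_flats_append remove_flats_replicate_Flat)

lemma flat_insertions_UD_eq_hump:
  assumes "ss \<in> flat_insertions L [Asc, Desc]"
  obtains i j where "i < j" "j < L" "ss = hump L i j"
proof -
  have ss: "length ss = L" "remove_flats ss = [Asc, Desc]" using assms by (auto simp: flat_insertions_def)
  obtain a r1 where r1: "ss = replicate a Flat @ Asc # r1" "remove_flats r1 = [Desc]"
    using remove_flats_eq_Cons[OF ss(2)] by auto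
  obtain b r2 where r2: "r1 = replicate b Flat @ Desc # r2" "remove_flats r2 = []"
    using remove_flats_eq_Cons[OF r1(2)] by auto
  have L: "L = a + b + length r2 + 2" using ss(1) r1(1) r2(1) by simp
  have "ss = hump L a (a + b + 1)"
    unfolding hump_def using r1(1) r2(1) remove_flats_eq_Nil[OF r2(2)] L by simp
  then show ?thesis using that[of a "a + b + 1"] L by simp
qed

lemma flat_insertions_UD:
  assumes "ss \<in> flat_insertions L [Asc, Desc]"
  shows "n_asc ss = 1" "n_desc ss = 1" "n_flat ss + 2 = L" "heights y ss = {y, y + 1}"
    "desc_weight d y ss = d (y + 1)"
  using assms step_counts_remove_flats[of ss] heights_remove_flats[of _ ss, symmetric]
    desc_weight_remove_flats[of _ _ ss, symmetric]
  by (auto simp: flat_insertions_def)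

lemma height_hump:
  assumes "i < j"
  shows "height (x, y) (hump L i j) t = y + (if x + 2 * int i < t \<and> t < x + 2 * int j then 1 else 0)"
proof -
  define b where "b = j - i - 1"
  have jb: "int j = int i + int b + 1" using assms b_def by simp
  have "hump L i j = replicate i Flat @ [Asc] @ replicate b Flat @ [Desc] @ replicate (L - j - 1) Flat"
    by (simp add: hump_def b_def)
  then show ?thesis
    by (simp add: height_append endpt_append endpt_replicate_Flat height_replicate_Flat height_le_start jb)
qed

lemma hump_inj:
  assumes "i < j" "i' < j'" and eq: "hump L i j = hump L i' j'"
  shows "i = i' \<and> j = j'"
proof -
  have flats: "takeWhile (\<lambda>s. s = Flat) (replicate n Flat @ x # xs) = replicate n Flat"
    if "x \<noteq> Flat" for n x xs
    using that by (induction n) auto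
  have pos: "length (takeWhile (\<lambda>s. s = Flat) (hump L i j)) = i"
    "length (takeWhile (\<lambda>s. s = Flat) (drop (Suc i) (hump L i j))) = j - i - 1" for i j
    by (simp_all add: hump_def flats)
  have "i = i'" using pos(1)[of i j] pos(1)[of i' j'] eq by simp
  moreover have "j - i - 1 = j' - i' - 1" using pos(2)[of i j] pos(2)[of i' j'] eq \<open>i = i'\<close> by simp
  ultimately show ?thesis using assms(1,2) by simp
qed

definition nested_humps :: "nat \<Rightarrow> (sstep list \<times> sstep list) set" where
  "nested_humps m = {(u, v). u \<in> flat_insertions m [Asc, Desc] \<and> v \<in> flat_insertions (Suc m) [Asc, Desc] \<and>
     (\<forall>t. 1 - int m \<le> t \<and> t \<le> int m - 1 \<longrightarrow> height (Pt (m - 1)) u t < height (Pt m) v t)}"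

definition two_top_family :: "nat \<Rightarrow> sstep list \<Rightarrow> sstep list \<Rightarrow> nat \<Rightarrow> sstep list" where
  "two_top_family m u v = (top_family m v)(m - 1 := u)"

lemma nested_humps_ge_2: "(u, v) \<in> nested_humps m \<Longrightarrow> 2 \<le> m"
  using flat_insertions_UD(3) by (fastforce simp: nested_humps_def)

lemma X_total_asc_2_nested:
  assumes X: "\<sigma> \<in> X (int m)" and two: "total_asc m \<sigma> = 2" and second: "n_asc (\<sigma> (m - 1)) \<noteq> 0"
  shows "\<sigma> \<in> case_prod (two_top_family m) ` nested_humps m"
proof -
  obtain l where l: "m = Suc l" using second X_no_asc_0[OF X] by (cases m) auto
  have "n_asc (\<sigma> m) \<noteq> 0" using X_asc_propagates[OF X, of l] two second l by simp
  moreover have "n_asc (\<sigma> l) + n_asc (\<sigma> m) \<le> 2"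
    using sum_n_asc_le_total_asc[of "{l, m}" m \<sigma>] two l by simp
  ultimately have one: "n_asc (\<sigma> l) = 1" "n_asc (\<sigma> m) = 1" using second l by auto
  have below: "n_asc (\<sigma> i) = 0" if "i < l" for i
    using X_no_asc_below_top_two[OF X] two that l by simp
  have lower_l: "int l \<le> path_height \<sigma> l t" if "- int l \<le> t" "t \<le> int l" for t
    using X_path_height_above_flat[OF X, of l] below[of "l - 1"] one X_no_asc_0[OF X] that l by (cases l) auto
  have lower_m: "int m \<le> path_height \<sigma> m t" if "- int m \<le> t" "t \<le> int m" for t
    using X_path_height_lower_bound_Suc[OF X, of l] lower_l that l by simp
  have u: "\<sigma> l \<in> flat_insertions m [Asc, Desc]"
    using X_path_dyck[OF X _ lower_l] one dyck_words_1 l by simp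
  have v: "\<sigma> m \<in> flat_insertions (Suc m) [Asc, Desc]"
    using X_path_dyck[OF X _ lower_m] one dyck_words_1 by simp
  have "\<forall>t. 1 - int m \<le> t \<and> t \<le> int m - 1 \<longrightarrow> height (Pt (m - 1)) (\<sigma> l) t < height (Pt m) (\<sigma> m) t"
    using X_path_height_less_Suc[OF X, of l] l by auto
  then have "(\<sigma> l, \<sigma> m) \<in> nested_humps m" using u v by (simp add: nested_humps_def)
  moreover have "\<sigma> = two_top_family m (\<sigma> l) (\<sigma> m)"
  proof
    show "\<sigma> i = two_top_family m (\<sigma> l) (\<sigma> m) i" for i
      using X_outside[OF X, of i] X_no_asc(1)[OF X _ below[of i]] l
      by (auto simp: two_top_family_def top_family_def)
  qed
  ultimately show ?thesis by force
qed

lemma two_top_family_Suc: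
  "two_top_family (Suc l) u v i
    = (if i = Suc l then v else if i = l then u else if i < Suc l then replicate i Flat else [])"
  by (simp add: two_top_family_def top_family_def)

lemma two_top_family_in_X:
  assumes uv: "(u, v) \<in> nested_humps (Suc l)"
  shows "two_top_family (Suc l) u v \<in> X (int (Suc l))"
proof (rule X_intro)
  let ?m = "Suc l"
  have u: "u \<in> flat_insertions ?m [Asc, Desc]" and v: "v \<in> flat_insertions (Suc ?m) [Asc, Desc]"
    and below: "\<And>t. 1 - int ?m \<le> t \<Longrightarrow> t \<le> int ?m - 1 \<Longrightarrow> height (Pt l) u t < height (Pt ?m) v t"
    using uv by (auto simp: nested_humps_def)
  note U = flat_insertions_UD[OF u] and V = flat_insertions_UD[OF v]
  have endpt_u: "endpt (Pt l) u = Qt l" by (rule endpt_Pt) (use U in auto)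
  have endpt_v: "endpt (Pt ?m) v = Qt ?m" by (rule endpt_Pt) (use V in auto)
  show "endpt (Pt i) (two_top_family ?m u v i) = Qt i" if i: "i \<le> ?m" for i
  proof -
    consider "i = ?m" | "i = l" | "i < l" using i by linarith
    then show ?thesis by cases (simp_all add: two_top_family_Suc endpt_u endpt_v endpt_Pt)
  qed
  fix i j assume ij: "i \<le> ?m" "j \<le> ?m" "i \<noteq> j"
  have hs: "heights (snd (Pt i)) (two_top_family ?m u v i) =
      (if i = ?m then {int ?m, int ?m + 1} else if i = l then {int l, int l + 1} else {int i})"
    if "i \<le> ?m" for i
    using that U V by (auto simp: two_top_family_Suc Pt_def heights_replicate_Flat)
  have disj: "set (verts (Pt l) u) \<inter> set (verts (Pt ?m) v) = {}"
  proof (rule disjoint_verts_if_height_neq)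
    fix t assume "fst (Pt l) \<le> t" "t \<le> fst (endpt (Pt l) u)"
    then have "1 - int ?m \<le> t" "t \<le> int ?m - 1" using endpt_u by (auto simp: Pt_def Qt_def)
    then show "height (Pt l) u t \<noteq> height (Pt ?m) v t" using below by force
  qed
  show "set (verts (Pt i) (two_top_family ?m u v i)) \<inter> set (verts (Pt j) (two_top_family ?m u v j)) = {}"
  proof (cases "{i, j} = {l, ?m}")
    case True then show ?thesis using disj by (auto simp: two_top_family_Suc doubleton_eq_iff)
  next
    case False
    then show ?thesis
      by (intro disjoint_verts_if_heights_disjoint) (use hs[OF ij(1)] hs[OF ij(2)] ij in auto)
  qed
qed (simp add: two_top_family_Suc)

lemma two_top_family_nested_humps:
  assumes uv: "(u, v) \<in> nested_humps m"
  shows "two_top_family m u v \<in> X (int m)" and "total_asc m (two_top_family m u v) = 2"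
    and "n_asc (two_top_family m u v (m - 1)) \<noteq> 0"
    and "family_weight d m (two_top_family m u v) = d (int m) * d (int m + 1)"
proof -
  obtain l where ml: "m = Suc l" using nested_humps_ge_2[OF uv] by (cases m) auto
  have u: "u \<in> flat_insertions m [Asc, Desc]" and v: "v \<in> flat_insertions (Suc m) [Asc, Desc]"
    using uv by (auto simp: nested_humps_def)
  note U = flat_insertions_UD[OF u] and V = flat_insertions_UD[OF v]
  show "two_top_family m u v \<in> X (int m)" using two_top_family_in_X uv ml by simp
  have "total_asc m (two_top_family m u v) = (\<Sum>i\<le>Suc l. if i = Suc l then 1 else if i = l then 1 else 0)"
    unfolding total_asc_def by (rule sum.cong) (use U V ml in \<open>auto simp: two_top_family_Suc\<close>)
  then show "total_asc m (two_top_family m u v) = 2" by simp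
  show "n_asc (two_top_family m u v (m - 1)) \<noteq> 0" using U ml by (simp add: two_top_family_Suc)
  have "family_weight d m (two_top_family m u v)
      = (\<Prod>i\<le>Suc l. if i = Suc l then d (int m + 1) else if i = l then d (int m) else 1)"
    unfolding family_weight_def
    by (rule prod.cong) (use U V ml in \<open>auto simp: two_top_family_Suc desc_weight_replicate_Flat\<close>)
  then show "family_weight d m (two_top_family m u v) = d (int m) * d (int m + 1)" by simp
qed

lemma sum_family_weight_total_asc_2_nested:
  "(\<Sum>\<sigma>\<in>{\<sigma>\<in>X (int m). total_asc m \<sigma> = 2 \<and> n_asc (\<sigma> (m - 1)) \<noteq> 0}. family_weight d m \<sigma>)
    = real (card (nested_humps m)) * (d (int m) * d (int m + 1))"
proof -
  have eq: "{\<sigma>\<in>X (int m). total_asc m \<sigma> = 2 \<and> n_asc (\<sigma> (m - 1)) \<noteq> 0} = case_prod (two_top_family m) ` nested_humps m"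
    using X_total_asc_2_nested two_top_family_nested_humps by fast
  have inj: "inj_on (case_prod (two_top_family m)) (nested_humps m)"
  proof (rule inj_onI, clarify)
    fix u v u' v' assume uv: "(u, v) \<in> nested_humps m" and "two_top_family m u v = two_top_family m u' v'"
    then have "two_top_family m u v (m - 1) = two_top_family m u' v' (m - 1)"
      "two_top_family m u v m = two_top_family m u' v' m" by simp_all
    moreover have "m - 1 \<noteq> m" using nested_humps_ge_2[OF uv] by simp
    ultimately show "u = u' \<and> v = v'" by (simp add: two_top_family_def top_family_def)
  qed
  have "(\<Sum>x\<in>nested_humps m. family_weight d m (case_prod (two_top_family m) x))
      = (\<Sum>x\<in>nested_humps m. d (int m) * d (int m + 1))"
    by (rule sum.cong) (auto simp: two_top_family_nested_humps)
  then show ?thesis unfolding eq sum.reindex[OF inj] by simp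
qed

definition hump_positions :: "nat \<Rightarrow> ((nat \<times> nat) \<times> (nat \<times> nat)) set" where
  "hump_positions m = Sigma (Sigma {..<m} (\<lambda>j. {..<j})) (\<lambda>(j, i). {..i} \<times> {Suc j..m})"

definition hump_pair :: "nat \<Rightarrow> (nat \<times> nat) \<times> (nat \<times> nat) \<Rightarrow> sstep list \<times> sstep list" where
  "hump_pair m = (\<lambda>((j, i), (i', j')). (hump m i j, hump (Suc m) i' j'))"

text \<open>With the lower hump over (i, j) and the upper one over (i', j'), nesting means
  i' \<le> i and j < j'.\<close>
lemma nested_humps_eq_image: "nested_humps m = hump_pair m ` hump_positions m"
proof (intro equalityI subsetI)
  fix x assume x: "x \<in> nested_humps m"
  obtain u v where xuv: "x = (u, v)" by fastforce
  have m: "2 \<le> m" using nested_humps_ge_2 x xuv by simp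
  have u: "u \<in> flat_insertions m [Asc, Desc]" and v: "v \<in> flat_insertions (Suc m) [Asc, Desc]"
    and below: "\<And>t. 1 - int m \<le> t \<Longrightarrow> t \<le> int m - 1 \<Longrightarrow> height (Pt (m - 1)) u t < height (Pt m) v t"
    using x xuv by (auto simp: nested_humps_def)
  obtain i j where ij: "i < j" "j < m" "u = hump m i j" using flat_insertions_UD_eq_hump[OF u] .
  obtain i' j' where ij': "i' < j'" "j' < Suc m" "v = hump (Suc m) i' j'" using flat_insertions_UD_eq_hump[OF v] .
  have Pt: "Pt (m - 1) = (- int m + 1, int m - 1)" "Pt m = (- int m, int m)" using m by (simp_all add: Pt_def)
  have hu: "height (Pt (m - 1)) u t = int m - 1 + (if - int m + 1 + 2 * int i < t \<and> t < - int m + 1 + 2 * int j then 1 else 0)" for t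
    unfolding Pt ij(3) by (rule height_hump[OF ij(1)])
  have hv: "height (Pt m) v t = int m + (if - int m + 2 * int i' < t \<and> t < - int m + 2 * int j' then 1 else 0)" for t
    unfolding Pt ij'(3) by (rule height_hump[OF ij'(1)])
  have "i' \<le> i" using below[of "- int m + 2 + 2 * int i"] ij unfolding hu hv by (auto split: if_splits)
  moreover have "j < j'" using below[of "- int m + 2 * int j"] ij unfolding hu hv by (auto split: if_splits)
  ultimately show "x \<in> hump_pair m ` hump_positions m"
    using ij ij' xuv by (force simp: hump_positions_def hump_pair_def)
next
  fix x assume "x \<in> hump_pair m ` hump_positions m"
  then obtain j i i' j' where q: "j < m" "i < j" "i' \<le> i" "Suc j \<le> j'" "j' \<le> m"
    and x: "x = (hump m i j, hump (Suc m) i' j')" by (auto simp: hump_positions_def hump_pair_def)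
  have Pt: "Pt (m - 1) = (- int m + 1, int m - 1)" "Pt m = (- int m, int m)" using q by (simp_all add: Pt_def)
  have ij': "i' < j'" using q by simp
  have "\<forall>t. 1 - int m \<le> t \<and> t \<le> int m - 1 \<longrightarrow> height (Pt (m - 1)) (hump m i j) t < height (Pt m) (hump (Suc m) i' j') t"
    unfolding Pt height_hump[OF q(2)] height_hump[OF ij'] using q by (auto split: if_splits)
  then show "x \<in> nested_humps m"
    using x q hump_in_flat_insertions[of i j m] hump_in_flat_insertions[of i' j' "Suc m"]
    by (simp add: nested_humps_def)
qed

lemma inj_on_hump_pair: "inj_on (hump_pair m) (hump_positions m)"
proof (rule inj_onI)
  fix x y assume "x \<in> hump_positions m" "y \<in> hump_positions m" and eq: "hump_pair m x = hump_pair m y"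
  then obtain j i i' j' J I I' J' where xy: "x = ((j, i), (i', j'))" "y = ((J, I), (I', J'))"
    and "i < j" "i' < j'" "I < J" "I' < J'"
    by (force simp: hump_positions_def)
  with eq hump_inj[of i j I J m] hump_inj[of i' j' I' J' "Suc m"] show "x = y"
    by (simp add: hump_pair_def)
qed

lemma sum_Suc_choose_2: "(\<Sum>i<j. i + 1) = Suc j choose 2"
  by (induction j) (simp_all add: numeral_2_eq_2)

lemma sum_hump_positions: "(\<Sum>j<m. \<Sum>i<j. (i + 1) * (m - j)) = m + 2 choose 4"
proof (induction m)
  case (Suc m)
  have "(\<Sum>i<j. (i + 1) * (Suc m - j)) = (\<Sum>i<j. (i + 1) * (m - j)) + (Suc j choose 2)"
    if "j < Suc m" for j
  proof -
    have "(\<Sum>i<j. (i + 1) * (Suc m - j)) = (\<Sum>i<j. (i + 1) * (m - j) + (i + 1))"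
      using that by (intro sum.cong refl) (simp only: less_Suc_eq_le Suc_diff_le mult_Suc_right add.commute)
    also have "\<dots> = (\<Sum>i<j. (i + 1) * (m - j)) + (\<Sum>i<j. i + 1)" by (rule sum.distrib)
    finally show ?thesis by (simp only: sum_Suc_choose_2)
  qed
  then have "(\<Sum>j<Suc m. \<Sum>i<j. (i + 1) * (Suc m - j))
      = (\<Sum>j<Suc m. (\<Sum>i<j. (i + 1) * (m - j)) + (Suc j choose 2))"
    by (intro sum.cong) simp_all
  also have "\<dots> = (m + 2 choose 4) + (\<Sum>j<Suc m. Suc j choose 2)"
    using Suc.IH by (simp add: sum.distrib)
  also have "(\<Sum>j<Suc m. Suc j choose 2) = m + 2 choose 3"
    by (induction m) (simp_all add: eval_nat_numeral)
  finally show ?case by (simp add: eval_nat_numeral)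
qed simp

lemma card_nested_humps: "card (nested_humps m) = m + 2 choose 4"
proof -
  have "card (nested_humps m) = card (hump_positions m)"
    unfolding nested_humps_eq_image by (rule card_image[OF inj_on_hump_pair])
  also have "\<dots> = (\<Sum>(j, i)\<in>Sigma {..<m} (\<lambda>j. {..<j}). (i + 1) * (m - j))"
    unfolding hump_positions_def by (subst card_SigmaI) (auto intro!: sum.cong)
  also have "\<dots> = (\<Sum>j<m. \<Sum>i<j. (i + 1) * (m - j))" by (rule sum.Sigma[symmetric]) auto
  finally show ?thesis by (simp only: sum_hump_positions)
qed

lemma asc_coeff_2:
  "asc_coeff d m 2 = real (m + 2 choose 4) * d (int m + 1) * (d (int m + 2) + d (int m + 1) + d (int m))"
proof -
  let ?A = "{\<sigma>\<in>X (int m). total_asc m \<sigma> = 2 \<and> n_asc (\<sigma> (m - 1)) = 0}"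
  let ?B = "{\<sigma>\<in>X (int m). total_asc m \<sigma> = 2 \<and> n_asc (\<sigma> (m - 1)) \<noteq> 0}"
  have "{\<sigma>\<in>X (int m). total_asc m \<sigma> = 2} = ?A \<union> ?B" by auto
  then have "asc_coeff d m 2 = sum (family_weight d m) ?A + sum (family_weight d m) ?B"
    unfolding asc_coeff_def by (simp only:) (rule sum.union_disjoint, use X_finite in auto)
  then show ?thesis
    unfolding sum_family_weight_total_asc_2_top_only sum_family_weight_total_asc_2_nested card_nested_humps
    by (simp add: algebra_simps)
qed

lemma power_expansion_eq_powi:
  fixes R a b c :: real
  assumes "k = int K" and "K = 0 \<Longrightarrow> a = 0" and "K \<le> 1 \<Longrightarrow> b = 0"
  shows "R ^ K + a * R ^ (K - 1) + b * R ^ (K - 2) + c = R powi k + a * R powi (k - 1) + b * R powi (k - 2) + c"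
proof -
  have "K = 0 \<or> K = 1 \<or> (k - 1 = int (K - 1) \<and> k - 2 = int (K - 2))" using assms(1) by auto
  then show ?thesis using assms by (auto simp: power_int_of_nat simp flip: of_nat_diff)
qed

lemma sum_X_weight_expansion:
  "(\<Sum>\<sigma>\<in>X (int m). \<Prod>i\<le>m. pathW d R (Pt i) (\<sigma> i)) =
     R powi int (tri m) + real (Suc m choose 2) * d (int m + 1) * R powi (int (tri m) - 1)
     + real (m + 2 choose 4) * d (int m + 1) * (d (int m + 2) + d (int m + 1) + d (int m)) * R powi (int (tri m) - 2)
     + poly (asc_tail d m) R"
  unfolding sum_X_weight_by_total_asc asc_coeff_0 asc_coeff_1 asc_coeff_2 mult_1
  by (rule power_expansion_eq_powi) (use tri_eq_0_iff[of m] tri_le_1_iff[of m] in auto)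

lemma real_choose_2: "real (n choose 2) = real n * (real n - 1) / 2"
  by (simp add: binomial_gbinomial gbinomial_prod_rev eval_nat_numeral)

lemma real_choose_4: "real (n choose 4) = real n * (real n - 1) * (real n - 2) * (real n - 3) / 24"
  by (simp add: binomial_gbinomial gbinomial_prod_rev eval_nat_numeral field_simps)

lemma Np_expansion:
  "Np p R = R powi int (tri (Suc p)) + (real p + 1)^2 * (real p + 2) / 2 * R powi (int (tri (Suc p)) - 1)
     + real p * (real p + 1)^3 * (real p + 2) * (real p + 3) / 8 * R powi (int (tri (Suc p)) - 2)
     + poly (asc_tail (\<lambda>y. of_int y - 1) (Suc p)) R"
proof -
  have "int p + 1 = int (Suc p)" by simp
  then have "Np p R = (\<Sum>\<sigma>\<in>X (int (Suc p)). \<Prod>i\<le>Suc p. pathW (\<lambda>y. of_int y - 1) R (Pt i) (\<sigma> i))"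
    unfolding Np_def W2_def by (simp only: idx_of_nat)
  then show ?thesis
    unfolding sum_X_weight_expansion real_choose_2 real_choose_4
    by (simp add: field_simps power2_eq_square power3_eq_cube)
qed

lemma Dp_Suc_expansion:
  "Dp (Suc q) R = R powi int (tri q) + real q * (real q + 1) * (real q + 2) / 2 * R powi (int (tri q) - 1)
     + (real q - 1) * real q * (real q + 1) * (real q + 2)^3 / 8 * R powi (int (tri q) - 2)
     + poly (asc_tail (\<lambda>y. of_int y + 1) q) R"
proof -
  have "int (Suc q) - 1 = int q" by simp
  then have "Dp (Suc q) R = (\<Sum>\<sigma>\<in>X (int q). \<Prod>i\<le>q. pathW (\<lambda>y. of_int y + 1) R (Pt i) (\<sigma> i))"
    unfolding Dp_def W0_def by (simp only: idx_of_nat)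
  then show ?thesis
    unfolding sum_X_weight_expansion real_choose_2 real_choose_4
    by (simp add: field_simps power3_eq_cube)
qed

lemma Dp_0: "Dp 0 R = 1"
proof -
  have "idx (- 1) = {}" by (auto simp: idx_def)
  then have "X (- 1) = {\<lambda>_. []}" by (auto simp: X_def)
  then show ?thesis by (simp add: Dp_def W0_def \<open>idx (- 1) = {}\<close>)
qed

theorem theorem6p4:
  fixes p :: nat and \<kappa> :: int
  defines "\<kappa> \<equiv> (int p + 1) * (int p + 2) div 2"
  shows "(\<exists>E. bigO_poly E (\<kappa> - 3) \<and>
            (\<forall>R::real. Np p R = R powi \<kappa>
               + (real p + 1)^2 * (real p + 2) / 2 * R powi (\<kappa> - 1)
               + real p * (real p + 1)^3 * (real p + 2) * (real p + 3) / 8 * R powi (\<kappa> - 2)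
               + poly E R))
       \<and> (\<exists>E. bigO_poly E (\<kappa> - 2 * int p - 4) \<and>
            (\<forall>R::real. Dp p R = R powi (\<kappa> - 2 * int p - 1)
               + (real p - 1) * real p * (real p + 1) / 2 * R powi (\<kappa> - 2 * int p - 2)
               + (real p - 2) * (real p - 1) * real p * (real p + 1)^3 / 8
                   * R powi (\<kappa> - 2 * int p - 3)
               + poly E R))"
    (is "(\<exists>E. ?N E) \<and> (\<exists>E. ?D E)")
proof
  have "(int p + 1) * (int p + 2) = 2 * int (tri (Suc p))"
    using arg_cong[OF double_tri[of "Suc p"], of int] by (simp add: algebra_simps)
  then have \<kappa>: "\<kappa> = int (tri (Suc p))" unfolding \<kappa>_def by simp
  show "\<exists>E. ?N E"
    by (intro exI[of _ "asc_tail (\<lambda>y. of_int y - 1) (Suc p)"]) (simp add: \<kappa> Np_expansion asc_tail_bigO)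
  show "\<exists>E. ?D E"
  proof (cases p)
    case 0
    then show ?thesis by (intro exI[of _ 0]) (simp add: \<kappa> Dp_0 bigO_poly_def tri_Suc tri_0)
  next
    case (Suc q)
    then have "\<kappa> = int (tri q) + 2 * int p + 1" using \<kappa> by (simp add: tri_Suc)
    then show ?thesis
      by (intro exI[of _ "asc_tail (\<lambda>y. of_int y + 1) q"])
        (simp add: Suc Dp_Suc_expansion asc_tail_bigO algebra_simps)
  qed
qed

end
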